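(* Let $\nu\in\mathbb{C}$, $k\in\mathbb{N}$, $\epsilon_1,\epsilon_2\in\{\pm1\}$, $E_0=\epsilon_1(4k+2)+4\epsilon_2\nu$, and $$Y(z)=z^{2\epsilon_1\epsilon_2\nu+1}e^{-\epsilon_1z^2/2}\,{}_1F_1(-k,2\epsilon_1\epsilon_2\nu+1,\epsilon_1z^2)$$ (with ${}_1F_1$ replaced by its regularization $\frac{\Gamma(2\epsilon_1\epsilon_2\nu+1+k)}{\Gamma(2\epsilon_1\epsilon_2\nu+1)}{}_1F_1(\cdots)$ when needed). Then there exists $M\in\mathbb{C}(z,E)$, regular at $E=E_0$, with $M(z,E_0)=-Y'(z)/Y(z)$ and such that $$H(z,E):=M^2z^2+Mz-M'z^2-z^4+z^2E-4\nu^2+1=O((E-E_0)^2)\quad (E\to E_0)$$ if and only if $2\epsilon_1\epsilon_2\nu+k\in\mathbb{N}$.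
   Context: $'$ denotes $\partial/\partial z$. $Y$ is a hyperexponential solution of $z^2Y''-zY'+(-z^4+E_0z^2-4\nu^2+1)Y=0$; equivalently $M(z,E_0)=-Y'/Y$ makes $H(z,E_0)=0$. In the paper, this expresses that the polynomial $w(E)$ in the factorization $H=w(E)P(z)/Q(z,E)$ may have a double root at $E_0$, which is required for the resulting potential to be quantum integrable. *)

theory Defs
  imports "HOL-Analysis.Analysis" "HOL-Computational_Algebra.Polynomial"
begin

text \<open>Bivariate polynomials in (z,E) are encoded as polynomials in E whose
coefficients are polynomials in z, i.e. the type complex poly poly.
A rational function M in C(z,E) is written as P/Q with P, Q such polynomials.\<close>

definition varZ :: "complex poly poly" where "varZ = [:[:0, 1:]:]"
definition varE :: "complex poly poly" where "varE = [:0, 1:]"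

definition zderiv :: "complex poly poly \<Rightarrow> complex poly poly" where
  "zderiv p = map_poly pderiv p"

text \<open>Numerator of H(z,E) = M^2 z^2 + M z - M' z^2 - z^4 + z^2 E - 4 nu^2 + 1
  for M = P/Q; H = Hnum nu P Q / Q^2.\<close>
definition Hnum :: "complex \<Rightarrow> complex poly poly \<Rightarrow> complex poly poly \<Rightarrow> complex poly poly" where
  "Hnum \<nu> P Q =
     P^2 * varZ^2 + P * Q * varZ - (zderiv P * Q - P * zderiv Q) * varZ^2
     + (varZ^2 * varE - varZ^4 - [:[:4 * \<nu>^2 - 1:]:]) * Q^2"

text \<open>Regularized Kummer polynomial: (b)_k * 1F1(-k; b; x)
  = sum_{j<=k} (-k)_j (b+j)_{k-j} x^j / j!  (equals Gamma(b+k)/Gamma(b) 1F1(-k;b;x)).\<close>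
definition kummerReg :: "nat \<Rightarrow> complex \<Rightarrow> complex \<Rightarrow> complex" where
  "kummerReg k b x = (\<Sum>j\<le>k. pochhammer (- of_nat k) j * pochhammer (b + of_nat j) (k - j)
                              / fact j * x ^ j)"

definition Yfun :: "complex \<Rightarrow> nat \<Rightarrow> int \<Rightarrow> int \<Rightarrow> complex \<Rightarrow> complex" where
  "Yfun \<nu> k \<epsilon>1 \<epsilon>2 z =
     (let b = 2 * of_int \<epsilon>1 * of_int \<epsilon>2 * \<nu> + 1 in
      z powr b * exp (- of_int \<epsilon>1 * z^2 / 2) * kummerReg k b (of_int \<epsilon>1 * z^2))"

end

theory Submission
  imports Defs "HOL-Computational_Algebra.Polynomial_Factorial" "HOL-Computational_Algebra.Field_as_Ring"
begin

text \<open>Put b = 2 e \<epsilon>2 \<nu> + 1 with e = \<epsilon>1, let F be the Kummer polynomial and f(z) = F(e z^2),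
  and expand M = P/Q in E - E0. The order-zero part of H = 0 is the Riccati equation for
  M0 = -Y'/Y, which holds by Kummer's equation. The first-order part is linear in the E-derivative
  M1 of M at E0: for T = f^2 M1 and the weight w = z^(2b-1) exp(-e z^2) = Y^2/z it reads
  (w T)' = w f^2, so the question is whether w f^2 has a primitive w T with T rational.

  If b is a positive integer, or b = 1 - r with 1 \<le> r \<le> k (then z^(2r) divides f), the function
  w f^2 is exp(-e z^2) times an odd polynomial, and substituting x = z^2 gives a primitive of the
  required form. Conversely, the denominator of a rational T can only vanish at 0, and dividing out
  powers of z leaves a polynomial solution, possibly at a resonance 2b - 1 \<in> \<nat>. The formal
  Gaussian moments of w annihilate z (w V)'/w for every polynomial V; paired with z f^2 they give
  k! (b)_k by the orthogonality of Laguerre polynomials, which vanishes exactly when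
  b \<in> {0, -1, ..., 1 - k}. At a half-integer resonance the same pairing is non-zero.\<close>

lemma pderiv_sum: "pderiv (\<Sum>i\<in>A. f i) = (\<Sum>i\<in>A. pderiv (f i))"
  using higher_pderiv_sum[of 1 f A] by simp

lemma pcompose_power: "(p ^ n) \<circ>\<^sub>p q = (p \<circ>\<^sub>p q) ^ n"
  for p q :: "'a::comm_semiring_1 poly"
  by (induction n) (simp_all add: pcompose_mult pcompose_1)

lemma monom_pcompose_monom: "monom c j \<circ>\<^sub>p monom a i = monom (c * a ^ j) (i * j)"
  for a c :: "'a::comm_semiring_1"
proof -
  have "monom c j \<circ>\<^sub>p monom a i = smult c (monom a i ^ j)"
    by (simp add: monom_altdef[of c j] pcompose_smult pcompose_power pcompose_pCons)
  then show ?thesis by (simp add: monom_power smult_monom)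
qed

lemma linear_sq_dvd_iff:
  fixes h :: "'a::idom poly"
  shows "[:-c, 1:]\<^sup>2 dvd h \<longleftrightarrow> poly h c = 0 \<and> poly (pderiv h) c = 0"
proof
  assume "[:-c, 1:]\<^sup>2 dvd h"
  then obtain r where "h = [:-c, 1:]\<^sup>2 * r" by auto
  then show "poly h c = 0 \<and> poly (pderiv h) c = 0"
    by (simp add: pderiv_mult pderiv_power pderiv_pCons)
next
  assume roots: "poly h c = 0 \<and> poly (pderiv h) c = 0"
  then obtain g where g: "h = [:-c, 1:] * g" by (auto simp: poly_eq_0_iff_dvd)
  have "pderiv h = g + [:-c, 1:] * pderiv g"
    unfolding g pderiv_mult by (simp add: pderiv_pCons)
  then have "poly g c = 0" using roots by simp
  then obtain g2 where "g = [:-c, 1:] * g2" by (auto simp: poly_eq_0_iff_dvd)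
  then have "h = [:-c, 1:]\<^sup>2 * g2" by (simp only: g power2_eq_square mult.assoc)
  then show "[:-c, 1:]\<^sup>2 dvd h" by simp
qed

definition \<zeta> :: "complex poly" where "\<zeta> = [:0, 1:]"

lemma pderiv_\<zeta> [simp]: "pderiv \<zeta> = 1"
  by (simp add: \<zeta>_def pderiv_pCons)

lemma poly_\<zeta> [simp]: "poly \<zeta> x = x"
  by (simp add: \<zeta>_def)

lemma \<zeta>_nonzero [simp]: "\<zeta> \<noteq> 0"
  by (simp add: \<zeta>_def)

lemma pcompose_\<zeta> [simp]: "\<zeta> \<circ>\<^sub>p q = q"
  by (simp add: \<zeta>_def pcompose_pCons)

lemma smult_\<zeta>: "smult a \<zeta> = [:0, a:]"
  by (simp add: \<zeta>_def)

lemma \<zeta>_eq_monom: "\<zeta> = monom 1 1"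
  by (simp add: \<zeta>_def monom_Suc)

lemma prime_elem_\<zeta>: "prime_elem \<zeta>"
  unfolding \<zeta>_def by (rule prime_elem_linear_field_poly) simp

lemma \<zeta>_mult_pderiv_power: "\<zeta> * pderiv (\<zeta> ^ n) = of_nat n * \<zeta> ^ n"
proof (cases n)
  case (Suc m)
  then show ?thesis
    by (simp only: pderiv_power_Suc pderiv_\<zeta>) (simp add: of_nat_poly algebra_simps)
qed simp

lemma zderiv_pCons: "zderiv (pCons a p) = pCons (pderiv a) (zderiv p)"
  unfolding zderiv_def by (simp add: map_poly_pCons)

lemma poly_zderiv_const: "poly (zderiv P) [:e:] = pderiv (poly P [:e:])"
proof (induction P)
  case 0
  then show ?case by (simp add: zderiv_def)
next
  case (pCons a p)
  then show ?case by (simp add: zderiv_pCons pderiv_add pderiv_mult pderiv_smult)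
qed

lemma pderiv_zderiv: "pderiv (zderiv P) = zderiv (pderiv P)"
  by (rule poly_eqI) (simp add: zderiv_def coeff_pderiv coeff_map_poly pderiv_mult pderiv_add)

text \<open>For M = A/D, the numerator of H(z, E0), and the numerator of \<open>\<partial>\<^sub>E H\<close> at E0 when
  A, D are the values and A', D' the E-derivatives of P, Q at E0.\<close>

definition riccati_num :: "complex \<Rightarrow> complex \<Rightarrow> complex poly \<Rightarrow> complex poly \<Rightarrow> complex poly" where
  "riccati_num \<nu> E0 A D = A\<^sup>2 * \<zeta>\<^sup>2 + A * D * \<zeta> - (pderiv A * D - A * pderiv D) * \<zeta>\<^sup>2
      + (\<zeta>\<^sup>2 * [:E0:] - \<zeta> ^ 4 - [:4 * \<nu>\<^sup>2 - 1:]) * D\<^sup>2"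

definition riccati_num_deriv ::
  "complex \<Rightarrow> complex \<Rightarrow> complex poly \<Rightarrow> complex poly \<Rightarrow> complex poly \<Rightarrow> complex poly \<Rightarrow> complex poly" where
  "riccati_num_deriv \<nu> E0 A D A' D' = 2 * A * A' * \<zeta>\<^sup>2 + (A' * D + A * D') * \<zeta>
     - (pderiv A' * D + pderiv A * D' - A' * pderiv D - A * pderiv D') * \<zeta>\<^sup>2
     + \<zeta>\<^sup>2 * D\<^sup>2 + (\<zeta>\<^sup>2 * [:E0:] - \<zeta> ^ 4 - [:4 * \<nu>\<^sup>2 - 1:]) * (2 * D * D')"

lemma riccati_num_mult: "riccati_num \<nu> E0 (g * A) (g * D) = g\<^sup>2 * riccati_num \<nu> E0 A D"
proof -
  have "(g * A)\<^sup>2 * z\<^sup>2 + (g * A) * (g * D) * z - ((g * A' + A * g') * (g * D) - (g * A) * (g * D' + D * g')) * z\<^sup>2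
      + w * (g * D)\<^sup>2 = g\<^sup>2 * (A\<^sup>2 * z\<^sup>2 + A * D * z - (A' * D - A * D') * z\<^sup>2 + w * D\<^sup>2)"
    for g A D g' A' D' z w :: "complex poly"
    by (simp add: algebra_simps power2_eq_square)
  then show ?thesis unfolding riccati_num_def pderiv_mult .
qed

lemma poly_Hnum_const:
  "poly (Hnum \<nu> P Q) [:E0:] = riccati_num \<nu> E0 (poly P [:E0:]) (poly Q [:E0:])"
  by (simp add: Hnum_def riccati_num_def varZ_def varE_def \<zeta>_def poly_zderiv_const)

lemma poly_pderiv_Hnum_const:
  "poly (pderiv (Hnum \<nu> P Q)) [:E0:] = riccati_num_deriv \<nu> E0
     (poly P [:E0:]) (poly Q [:E0:]) (poly (pderiv P) [:E0:]) (poly (pderiv Q) [:E0:])"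
  by (simp add: Hnum_def riccati_num_deriv_def varZ_def varE_def \<zeta>_def poly_zderiv_const
      pderiv_add pderiv_diff pderiv_mult pderiv_power pderiv_zderiv pderiv_pCons pderiv_smult)
     (simp add: algebra_simps power2_eq_square)

lemma double_root_iff:
  "[:[:- E0:], 1:]\<^sup>2 dvd Hnum \<nu> P Q \<longleftrightarrow>
     riccati_num \<nu> E0 (poly P [:E0:]) (poly Q [:E0:]) = 0 \<and>
     riccati_num_deriv \<nu> E0 (poly P [:E0:]) (poly Q [:E0:]) (poly (pderiv P) [:E0:]) (poly (pderiv Q) [:E0:]) = 0"
  using linear_sq_dvd_iff[of "[:E0:]" "Hnum \<nu> P Q"] by (simp add: poly_Hnum_const poly_pderiv_Hnum_const)

section \<open>The Kummer polynomial\<close>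

definition kummer_coeff :: "nat \<Rightarrow> complex \<Rightarrow> nat \<Rightarrow> complex" where
  "kummer_coeff k b j = pochhammer (- of_nat k) j * pochhammer (b + of_nat j) (k - j) / fact j"

definition kummer_poly :: "nat \<Rightarrow> complex \<Rightarrow> complex poly" where
  "kummer_poly k b = (\<Sum>j\<le>k. monom (kummer_coeff k b j) j)"

lemma kummer_coeff_eq_0: "k < j \<Longrightarrow> kummer_coeff k b j = 0"
  by (simp add: kummer_coeff_def pochhammer_of_nat_eq_0_lemma)

lemma kummer_coeff_top: "kummer_coeff k b k = (-1) ^ k"
  by (simp add: kummer_coeff_def pochhammer_same)

lemma coeff_kummer_poly: "coeff (kummer_poly k b) j = kummer_coeff k b j"
  by (auto simp: kummer_poly_def coeff_sum coeff_monom kummer_coeff_eq_0)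

lemma poly_kummer_poly: "poly (kummer_poly k b) x = kummerReg k b x"
  by (simp add: kummer_poly_def kummerReg_def poly_sum poly_monom kummer_coeff_def)

lemma kummer_poly_nonzero: "kummer_poly k b \<noteq> 0"
proof
  assume "kummer_poly k b = 0"
  then have "coeff (kummer_poly k b) k = 0" by simp
  then show False by (simp add: coeff_kummer_poly kummer_coeff_top)
qed

lemma kummer_coeff_Suc:
  "of_nat (Suc j) * (b + of_nat j) * kummer_coeff k b (Suc j) = (of_nat j - of_nat k) * kummer_coeff k b j"
proof (cases "j < k")
  case True
  then obtain m where m: "k - j = Suc m" by (metis Suc_diff_Suc)
  then have m2: "k - Suc j = m" by simp
  have "of_nat (Suc j) * (b + of_nat j) * kummer_coeff k b (Suc j)
      = (b + of_nat j) * pochhammer (- of_nat k) (Suc j) * pochhammer (b + of_nat (Suc j)) m / fact j"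
  proof -
    have "(fact (Suc j) :: complex) = of_nat (Suc j) * fact j" by (simp add: fact_Suc)
    moreover have "(of_nat (Suc j) :: complex) \<noteq> 0" by (rule of_nat_neq_0)
    ultimately show ?thesis unfolding kummer_coeff_def m2 by (simp add: field_simps del: of_nat_Suc)
  qed
  also have "\<dots> = pochhammer (- of_nat k) (Suc j) * pochhammer (b + of_nat j) (Suc m) / fact j"
    by (simp add: pochhammer_rec ac_simps)
  also have "\<dots> = (of_nat j - of_nat k) * kummer_coeff k b j"
    by (simp add: kummer_coeff_def m pochhammer_Suc algebra_simps)
  finally show ?thesis .
next
  case False
  then show ?thesis by (cases "j = k") (simp_all add: kummer_coeff_eq_0)
qed

lemma kummer_poly_ode:
  "\<zeta> * pderiv (pderiv (kummer_poly k b)) + ([:b:] - \<zeta>) * pderiv (kummer_poly k b)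
     + [:of_nat k:] * kummer_poly k b = 0"
proof (rule poly_eqI)
  fix n
  have "of_nat (Suc n) * (b + of_nat n) * kummer_coeff k b (Suc n) + (of_nat k - of_nat n) * kummer_coeff k b n = 0"
    using kummer_coeff_Suc[of n b k] by (simp add: algebra_simps)
  then show "coeff (\<zeta> * pderiv (pderiv (kummer_poly k b)) + ([:b:] - \<zeta>) * pderiv (kummer_poly k b)
     + [:of_nat k:] * kummer_poly k b) n = coeff 0 n"
    by (cases n) (simp_all add: \<zeta>_def coeff_pderiv coeff_kummer_poly algebra_simps)
qed

definition kummer_quad :: "nat \<Rightarrow> complex \<Rightarrow> complex \<Rightarrow> complex poly" where
  "kummer_quad k b e = kummer_poly k b \<circ>\<^sub>p [:0, 0, e:]"

lemma kummer_quad_nonzero: "e \<noteq> 0 \<Longrightarrow> kummer_quad k b e \<noteq> 0"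
  unfolding kummer_quad_def using kummer_poly_nonzero pcompose_eq_0 by fastforce

lemma kummer_quad_ode:
  "\<zeta> * pderiv (pderiv (kummer_quad k b e)) + (2 * [:b:] - 1 - 2 * [:e:] * \<zeta>\<^sup>2) * pderiv (kummer_quad k b e)
     + 4 * [:e:] * of_nat k * \<zeta> * kummer_quad k b e = 0"
proof -
  let ?q = "[:0, 0, e:]" and ?F = "kummer_poly k b"
  define F0 F1 F2 where "F0 = ?F \<circ>\<^sub>p ?q" and "F1 = pderiv ?F \<circ>\<^sub>p ?q"
    and "F2 = pderiv (pderiv ?F) \<circ>\<^sub>p ?q"
  have q: "?q = [:e:] * \<zeta>\<^sup>2" and dq: "pderiv ?q = 2 * [:e:] * \<zeta>"
    by (simp_all add: \<zeta>_def power2_eq_square pderiv_pCons numeral_poly algebra_simps)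
  have ode: "[:e:] * \<zeta>\<^sup>2 * F2 + ([:b:] - [:e:] * \<zeta>\<^sup>2) * F1 + of_nat k * F0 = 0"
    using arg_cong[OF kummer_poly_ode[of k b], of "\<lambda>p. p \<circ>\<^sub>p ?q"] unfolding F0_def F1_def F2_def
    by (simp add: pcompose_add pcompose_mult pcompose_diff pcompose_smult of_nat_poly q ac_simps)
  have d1: "pderiv (kummer_quad k b e) = F1 * (2 * [:e:] * \<zeta>)"
    by (simp add: kummer_quad_def F1_def pderiv_pcompose dq)
  have d2: "pderiv (pderiv (kummer_quad k b e)) = F2 * (2 * [:e:] * \<zeta>) * (2 * [:e:] * \<zeta>) + F1 * (2 * [:e:])"
  proof -
    have "pderiv (2 * [:e:] * \<zeta>) = 2 * [:e:]"
      by (simp add: \<zeta>_def pderiv_pCons numeral_poly)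
    moreover have "pderiv F1 = F2 * (2 * [:e:] * \<zeta>)"
      by (simp add: F1_def F2_def pderiv_pcompose dq)
    ultimately show ?thesis
      unfolding d1 pderiv_mult by (simp add: ac_simps)
  qed
  have "\<zeta> * pderiv (pderiv (kummer_quad k b e)) + (2 * [:b:] - 1 - 2 * [:e:] * \<zeta>\<^sup>2) * pderiv (kummer_quad k b e)
     + 4 * [:e:] * of_nat k * \<zeta> * kummer_quad k b e
     = 4 * [:e:] * \<zeta> * ([:e:] * \<zeta>\<^sup>2 * F2 + ([:b:] - [:e:] * \<zeta>\<^sup>2) * F1 + of_nat k * F0)"
    unfolding d2 unfolding d1 by (simp add: kummer_quad_def F0_def algebra_simps power2_eq_square)
  then show ?thesis using ode by simp
qed

text \<open>The numerator of M0 = -Y'/Y = log_deriv_num / (z f) for Y = z^b exp(-e z^2/2) f(z).\<close>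

definition log_deriv_num :: "nat \<Rightarrow> complex \<Rightarrow> complex \<Rightarrow> complex poly" where
  "log_deriv_num k b e =
     - ([:b:] * kummer_quad k b e - [:e:] * \<zeta>\<^sup>2 * kummer_quad k b e + \<zeta> * pderiv (kummer_quad k b e))"

lemma riccati_num_log_deriv:
  assumes E0: "E0 = 2 * e * (2 * of_nat k + b)" and \<nu>: "4 * \<nu>\<^sup>2 - 1 = b\<^sup>2 - 2 * b" and e: "e\<^sup>2 = 1"
  shows "riccati_num \<nu> E0 (log_deriv_num k b e) (\<zeta> * kummer_quad k b e) = 0"
proof -
  define f B E where "f = kummer_quad k b e" and "B = [:b:]" and "E = [:e:]"
  have E0': "[:E0:] = 2 * E * (2 * of_nat k + B)"
    by (simp add: E0 E_def B_def numeral_poly of_nat_poly)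
  have \<nu>': "[:4 * \<nu>\<^sup>2 - 1:] = B\<^sup>2 - 2 * B"
    using \<nu> by (simp add: B_def numeral_poly power2_eq_square mult.commute)
  have "pderiv B = 0" "pderiv E = 0"
    by (simp_all add: B_def E_def pderiv_pCons)
  then have "riccati_num \<nu> E0 (log_deriv_num k b e) (\<zeta> * f)
    = \<zeta> ^ 3 * f * (\<zeta> * pderiv (pderiv f) + (2 * B - 1 - 2 * E * \<zeta>\<^sup>2) * pderiv f + 4 * E * of_nat k * \<zeta> * f)
      + (E\<^sup>2 - 1) * \<zeta> ^ 6 * f\<^sup>2"
    unfolding riccati_num_def log_deriv_num_def f_def[symmetric] B_def[symmetric] E_def[symmetric] E0' \<nu>'
    by (simp add: pderiv_mult pderiv_power pderiv_add pderiv_diff pderiv_minus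
        algebra_simps power2_eq_square eval_nat_numeral)
  moreover have "E\<^sup>2 = 1"
    using e by (simp add: E_def power2_eq_square one_pCons)
  ultimately show ?thesis
    using kummer_quad_ode[of k b e] by (simp add: f_def B_def E_def)
qed

context
  fixes \<nu> :: complex and k :: nat and \<epsilon>1 \<epsilon>2 :: int and b e :: complex
  assumes e_def: "e = of_int \<epsilon>1" and b_def: "b = 2 * of_int \<epsilon>1 * of_int \<epsilon>2 * \<nu> + 1"
begin

lemma Yfun_eq: "Yfun \<nu> k \<epsilon>1 \<epsilon>2 = (\<lambda>z. z powr b * exp (- e * z\<^sup>2 / 2) * poly (kummer_quad k b e) z)"
proof
  fix z
  show "Yfun \<nu> k \<epsilon>1 \<epsilon>2 z = z powr b * exp (- e * z\<^sup>2 / 2) * poly (kummer_quad k b e) z"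
    unfolding Yfun_def e_def b_def Let_def kummer_quad_def poly_pcompose poly_kummer_poly[symmetric]
    by (simp add: power2_eq_square ac_simps)
qed

lemma Yfun_nonzero_iff: "0 < Re z \<Longrightarrow> Yfun \<nu> k \<epsilon>1 \<epsilon>2 z \<noteq> 0 \<longleftrightarrow> poly (kummer_quad k b e) z \<noteq> 0"
  by (auto simp: Yfun_eq)

lemma deriv_Yfun:
  assumes z: "0 < Re z"
  shows "deriv (Yfun \<nu> k \<epsilon>1 \<epsilon>2) z = z powr b * exp (- e * z\<^sup>2 / 2) *
     (b / z * poly (kummer_quad k b e) z - e * z * poly (kummer_quad k b e) z + poly (pderiv (kummer_quad k b e)) z)"
proof -
  let ?f = "kummer_quad k b e"
  have z0: "z \<noteq> 0" using z by auto
  have nonpos: "z \<notin> \<real>\<^sub>\<le>\<^sub>0" using z by (auto simp: complex_nonpos_Reals_iff)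
  have "((\<lambda>z. z powr b * exp (- e * z\<^sup>2 / 2) * poly ?f z) has_field_derivative
      (b * z powr (b - 1) * exp (- e * z\<^sup>2 / 2) + z powr b * (exp (- e * z\<^sup>2 / 2) * (- e * (2 * z) / 2))) * poly ?f z
      + z powr b * exp (- e * z\<^sup>2 / 2) * poly (pderiv ?f) z) (at z)"
    by (intro DERIV_mult has_field_derivative_powr[OF nonpos] DERIV_chain2[OF DERIV_exp] poly_DERIV
        derivative_eq_intros) (use nonpos in auto)
  from DERIV_imp_deriv[OF this] show ?thesis
    unfolding Yfun_eq using z0 by (simp add: powr_diff powr_to_1 field_simps)
qed

lemma minus_deriv_Yfun_div_Yfun:
  assumes z: "0 < Re z" and f: "poly (kummer_quad k b e) z \<noteq> 0"
  shows "- deriv (Yfun \<nu> k \<epsilon>1 \<epsilon>2) z / Yfun \<nu> k \<epsilon>1 \<epsilon>2 z = poly (log_deriv_num k b e) z / (z * poly (kummer_quad k b e) z)"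
proof -
  have "z \<noteq> 0" "z powr b \<noteq> 0" using z by auto
  then show ?thesis
    unfolding deriv_Yfun[OF z] unfolding Yfun_eq log_deriv_num_def
    using f by (simp add: field_simps power2_eq_square)
qed

end

section \<open>The first-order condition as a linear ODE\<close>

text \<open>B^2 (z T' + C T - R) for T = A/B.\<close>

definition lin_ode_num :: "complex poly \<Rightarrow> complex poly \<Rightarrow> complex poly \<Rightarrow> complex poly \<Rightarrow> complex poly" where
  "lin_ode_num C R A B = \<zeta> * (pderiv A * B - A * pderiv B) + C * A * B - R * B\<^sup>2"

lemma lin_ode_num_mult: "lin_ode_num C R (g * A) (g * B) = g\<^sup>2 * lin_ode_num C R A B"
proof -
  have "z * ((g * A' + A * g') * (g * B) - (g * A) * (g * B' + B * g')) + C * (g * A) * (g * B) - R * (g * B)\<^sup>2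
     = g\<^sup>2 * (z * (A' * B - A * B') + C * A * B - R * B\<^sup>2)" for z g g' A A' B B' :: "complex poly"
    by (simp add: algebra_simps power2_eq_square)
  then show ?thesis unfolding lin_ode_num_def pderiv_mult .
qed

text \<open>z w'/w for the weight w = z^c exp(-e z^2).\<close>

definition weight_logderiv :: "complex \<Rightarrow> complex \<Rightarrow> complex poly" where
  "weight_logderiv c e = [:c:] - smult (2 * e) (\<zeta>\<^sup>2)"

definition moment_ode_solvable :: "nat \<Rightarrow> complex \<Rightarrow> complex \<Rightarrow> bool" where
  "moment_ode_solvable k b e \<longleftrightarrow>
     (\<exists>A B. B \<noteq> 0 \<and> lin_ode_num (weight_logderiv (2 * b - 1) e) (\<zeta> * (kummer_quad k b e)\<^sup>2) A B = 0)"

definition riccati_witness ::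
  "complex \<Rightarrow> nat \<Rightarrow> int \<Rightarrow> int \<Rightarrow> complex \<Rightarrow> complex poly poly \<Rightarrow> complex poly poly \<Rightarrow> bool" where
  "riccati_witness \<nu> k \<epsilon>1 \<epsilon>2 E0 P Q \<longleftrightarrow>
     poly Q [:E0:] \<noteq> 0 \<and>
     (\<forall>z. Re z > 0 \<longrightarrow> Yfun \<nu> k \<epsilon>1 \<epsilon>2 z \<noteq> 0 \<longrightarrow> poly (poly Q [:E0:]) z \<noteq> 0 \<longrightarrow>
        poly (poly P [:E0:]) z / poly (poly Q [:E0:]) z = - deriv (Yfun \<nu> k \<epsilon>1 \<epsilon>2) z / Yfun \<nu> k \<epsilon>1 \<epsilon>2 z) \<and>
     [:[:- E0:], 1:]\<^sup>2 dvd Hnum \<nu> P Q"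

lemma riccati_num_deriv_log_deriv:
  "riccati_num_deriv \<nu> E0 (g * log_deriv_num k b e) (g * (\<zeta> * kummer_quad k b e)) (\<zeta> * A) 0
    = - (\<zeta> ^ 3 * (kummer_quad k b e)\<^sup>2 * lin_ode_num (weight_logderiv (2 * b - 1) e) (\<zeta> * (kummer_quad k b e)\<^sup>2) A B)"
  if "g = kummer_quad k b e * B"
proof -
  define f Bc E where "f = kummer_quad k b e" and "Bc = [:b:]" and "E = [:e:]"
  have "weight_logderiv (2 * b - 1) e = 2 * Bc - 1 - 2 * E * \<zeta>\<^sup>2"
    by (simp add: weight_logderiv_def Bc_def E_def numeral_poly one_pCons algebra_simps)
  moreover have "pderiv Bc = 0" "pderiv E = 0"
    by (simp_all add: Bc_def E_def pderiv_pCons)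
  ultimately show ?thesis
    unfolding riccati_num_deriv_def lin_ode_num_def log_deriv_num_def that
      f_def[symmetric] Bc_def[symmetric] E_def[symmetric]
    by (simp add: pderiv_mult pderiv_add pderiv_diff pderiv_minus)
       (simp add: algebra_simps power2_eq_square power3_eq_cube)
qed

lemma riccati_witness_if_moment_ode_solvable:
  assumes e_def: "e = of_int \<epsilon>1" and b_def: "b = 2 * of_int \<epsilon>1 * of_int \<epsilon>2 * \<nu> + 1"
    and e: "e\<^sup>2 = 1" and E0: "E0 = 2 * e * (2 * of_nat k + b)" and \<nu>: "4 * \<nu>\<^sup>2 - 1 = b\<^sup>2 - 2 * b"
    and solvable: "moment_ode_solvable k b e"
  shows "\<exists>P Q. riccati_witness \<nu> k \<epsilon>1 \<epsilon>2 E0 P Q"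
proof -
  obtain T S where S: "S \<noteq> 0"
    and T: "lin_ode_num (weight_logderiv (2 * b - 1) e) (\<zeta> * (kummer_quad k b e)\<^sup>2) T S = 0"
    using solvable unfolding moment_ode_solvable_def by blast
  define f where "f = kummer_quad k b e"
  define g where "g = f * S"
  define A D where "A = g * log_deriv_num k b e" and "D = g * (\<zeta> * f)"
  define P Q where "P = [:A:] + [:-[:E0:], 1:] * [:\<zeta> * T:]" and "Q = [:D:]"
  have "e \<noteq> 0" using e by auto
  then have "f \<noteq> 0" by (simp add: f_def kummer_quad_nonzero)
  then have D: "D \<noteq> 0" using S by (simp add: D_def g_def)
  have PQ: "poly P [:E0:] = A" "poly Q [:E0:] = D"
    "poly (pderiv P) [:E0:] = \<zeta> * T" "poly (pderiv Q) [:E0:] = 0"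
    by (simp_all add: P_def Q_def pderiv_add pderiv_mult pderiv_pCons)
  have "riccati_num \<nu> E0 A D = 0"
    using riccati_num_log_deriv[OF E0 \<nu> e] by (simp add: A_def D_def f_def riccati_num_mult)
  moreover have "riccati_num_deriv \<nu> E0 A D (\<zeta> * T) 0 = 0"
    using riccati_num_deriv_log_deriv[of g k b e S \<nu> E0 T] T by (simp add: A_def D_def g_def f_def)
  ultimately have dvd: "[:[:- E0:], 1:]\<^sup>2 dvd Hnum \<nu> P Q"
    by (simp add: double_root_iff PQ)
  have "poly A z / poly D z = - deriv (Yfun \<nu> k \<epsilon>1 \<epsilon>2) z / Yfun \<nu> k \<epsilon>1 \<epsilon>2 z"
    if z: "Re z > 0" and Y: "Yfun \<nu> k \<epsilon>1 \<epsilon>2 z \<noteq> 0" and Dz: "poly D z \<noteq> 0" for z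
  proof -
    have "poly g z \<noteq> 0" using Dz by (simp add: D_def)
    then have "poly A z / poly D z = poly (log_deriv_num k b e) z / (z * poly f z)"
      by (simp add: A_def D_def)
    then show ?thesis
      using minus_deriv_Yfun_div_Yfun[OF e_def b_def z] Yfun_nonzero_iff[OF e_def b_def z] Y
      by (simp add: f_def)
  qed
  then have "riccati_witness \<nu> k \<epsilon>1 \<epsilon>2 E0 P Q"
    unfolding riccati_witness_def PQ using D dvd by blast
  then show ?thesis by blast
qed

lemma lin_ode_num_first_order:
  "\<zeta>\<^sup>2 * lin_ode_num (weight_logderiv (2 * b - 1) e) (\<zeta> * (kummer_quad k b e)\<^sup>2)
       ((kummer_quad k b e)\<^sup>2 * (A' * D - A * D')) (D\<^sup>2)
   = - (\<zeta> * (kummer_quad k b e)\<^sup>2 * D\<^sup>2 * riccati_num_deriv \<nu> E0 A D A' D')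
     + 2 * \<zeta> * (kummer_quad k b e)\<^sup>2 * D * D' * riccati_num \<nu> E0 A D
     + 2 * kummer_quad k b e * D * (A' * D - A * D') * \<zeta>\<^sup>2
       * (A * (\<zeta> * kummer_quad k b e) - log_deriv_num k b e * D)"
proof -
  define f Bc E K where "f = kummer_quad k b e" and "Bc = [:b:]" and "E = [:e:]"
    and "K = \<zeta>\<^sup>2 * [:E0:] - \<zeta> ^ 4 - [:4 * \<nu>\<^sup>2 - 1:]"
  have C: "weight_logderiv (2 * b - 1) e = 2 * Bc - 1 - 2 * E * \<zeta>\<^sup>2"
    by (simp add: weight_logderiv_def Bc_def E_def numeral_poly one_pCons algebra_simps)
  have "pderiv Bc = 0" "pderiv E = 0"
    by (simp_all add: Bc_def E_def pderiv_pCons)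
  then show ?thesis
    unfolding riccati_num_deriv_def riccati_num_def lin_ode_num_def log_deriv_num_def C
      f_def[symmetric] Bc_def[symmetric] E_def[symmetric] K_def[symmetric] power2_eq_square
    by (simp add: pderiv_mult pderiv_add pderiv_diff pderiv_minus)
       (simp add: algebra_simps)
qed

lemma poly_eq_0_if_vanishes_on_right_half_plane:
  fixes p :: "complex poly"
  assumes "finite S" and vanish: "\<And>z. 0 < Re z \<Longrightarrow> z \<notin> S \<Longrightarrow> poly p z = 0"
  shows "p = 0"
proof (rule ccontr)
  assume "p \<noteq> 0"
  then have "finite (S \<union> {z. poly p z = 0})" using assms(1) by (simp add: poly_roots_finite)
  moreover have "infinite (range (\<lambda>n. of_nat (Suc n) :: complex))"
    by (rule range_inj_infinite) (simp add: inj_on_def)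
  ultimately obtain z where "z \<in> range (\<lambda>n. of_nat (Suc n) :: complex)" "z \<notin> S \<union> {z. poly p z = 0}"
    by (metis finite_subset subsetI)
  then show False using vanish by auto
qed

lemma moment_ode_solvable_if_riccati_witness:
  assumes e_def: "e = of_int \<epsilon>1" and b_def: "b = 2 * of_int \<epsilon>1 * of_int \<epsilon>2 * \<nu> + 1"
    and e: "e\<^sup>2 = 1" and witness: "riccati_witness \<nu> k \<epsilon>1 \<epsilon>2 E0 P Q"
  shows "moment_ode_solvable k b e"
proof -
  define f where "f = kummer_quad k b e"
  define A D A' D' where "A = poly P [:E0:]" and "D = poly Q [:E0:]"
    and "A' = poly (pderiv P) [:E0:]" and "D' = poly (pderiv Q) [:E0:]"
  have "e \<noteq> 0" using e by auto
  then have f: "f \<noteq> 0" by (simp add: f_def kummer_quad_nonzero)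
  have D: "D \<noteq> 0"
    and agree: "\<And>z. Re z > 0 \<Longrightarrow> Yfun \<nu> k \<epsilon>1 \<epsilon>2 z \<noteq> 0 \<Longrightarrow> poly D z \<noteq> 0 \<Longrightarrow>
        poly A z / poly D z = - deriv (Yfun \<nu> k \<epsilon>1 \<epsilon>2) z / Yfun \<nu> k \<epsilon>1 \<epsilon>2 z"
    and H: "riccati_num \<nu> E0 A D = 0" "riccati_num_deriv \<nu> E0 A D A' D' = 0"
    using witness by (simp_all add: riccati_witness_def double_root_iff A_def D_def A'_def D'_def)
  have "A * (\<zeta> * f) - log_deriv_num k b e * D = 0"
  proof (rule poly_eq_0_if_vanishes_on_right_half_plane)
    show "finite ({z. poly f z = 0} \<union> {z. poly D z = 0})"
      using f D by (simp add: poly_roots_finite)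
    fix z assume z: "0 < Re z" and "z \<notin> {z. poly f z = 0} \<union> {z. poly D z = 0}"
    then have fz: "poly f z \<noteq> 0" and Dz: "poly D z \<noteq> 0" by auto
    have "poly A z / poly D z = poly (log_deriv_num k b e) z / (z * poly f z)"
      using agree[OF z] Yfun_nonzero_iff[OF e_def b_def z] minus_deriv_Yfun_div_Yfun[OF e_def b_def z] fz Dz
      by (simp add: f_def)
    then show "poly (A * (\<zeta> * f) - log_deriv_num k b e * D) z = 0"
      using fz Dz z by (auto simp: field_simps)
  qed
  then have "\<zeta>\<^sup>2 * lin_ode_num (weight_logderiv (2 * b - 1) e) (\<zeta> * f\<^sup>2) (f\<^sup>2 * (A' * D - A * D')) (D\<^sup>2) = 0"
    using lin_ode_num_first_order[of b e k A' D A D' \<nu> E0] H by (simp add: f_def)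
  then have "lin_ode_num (weight_logderiv (2 * b - 1) e) (\<zeta> * f\<^sup>2) (f\<^sup>2 * (A' * D - A * D')) (D\<^sup>2) = 0"
    by simp
  moreover have "D\<^sup>2 \<noteq> 0" using D by simp
  ultimately show ?thesis
    unfolding moment_ode_solvable_def f_def by (intro exI conjI)
qed

section \<open>Rational solutions of z T' + C T = R\<close>

text \<open>A root of B away from 0 would be a pole of z T' of higher order than the poles of C T - R.\<close>

lemma coprime_lin_ode_num_eq_0_imp_monomial:
  assumes coprime: "coprime A B" and B: "B \<noteq> 0" and sol: "lin_ode_num C R A B = 0"
  shows "\<exists>d n. d \<noteq> 0 \<and> B = [:d:] * \<zeta> ^ n"
proof -
  obtain D n where B_eq: "B = \<zeta> ^ n * D" and not_dvd: "\<not> \<zeta> dvd D"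
    using order_decomp[OF B, of 0] by (auto simp: \<zeta>_def)
  have "D dvd \<zeta> * pderiv A * B + C * A * B - R * B\<^sup>2"
    unfolding B_eq by (intro dvd_add dvd_diff) (simp_all add: power2_eq_square)
  also have "\<zeta> * pderiv A * B + C * A * B - R * B\<^sup>2 = \<zeta> * A * pderiv B"
    using sol unfolding lin_ode_num_def by (simp add: algebra_simps)
  also have "\<dots> = \<zeta> * A * pderiv (\<zeta> ^ n) * D + (\<zeta> ^ Suc n * A) * pderiv D"
    unfolding B_eq by (simp add: pderiv_mult algebra_simps)
  finally have "D dvd (\<zeta> ^ Suc n * A) * pderiv D"
    by (simp add: dvd_add_right_iff)
  moreover have "coprime D (\<zeta> ^ Suc n * A)"
  proof -
    have "coprime \<zeta> D" using prime_elem_imp_coprime[OF prime_elem_\<zeta> not_dvd] .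
    moreover have "coprime A D" using coprime unfolding B_eq by simp
    ultimately show ?thesis by (simp add: coprime_commute)
  qed
  ultimately have "D dvd pderiv D" using coprime_dvd_mult_right_iff by blast
  then obtain d where "D = [:d:]" by (auto elim: degree_eq_zeroE)
  then show ?thesis using B B_eq by (auto simp: ac_simps)
qed

lemma lin_ode_num_eq_0_imp_monomial_denominator:
  assumes B: "B \<noteq> 0" and sol: "lin_ode_num C R A B = 0"
  shows "\<exists>V n. \<zeta> * pderiv V + (C - of_nat n) * V = R * \<zeta> ^ n"
proof -
  define g where "g = gcd A B"
  define A1 B1 where "A1 = A div g" and "B1 = B div g"
  have "g \<noteq> 0" using B by (simp add: g_def)
  moreover have "A = g * A1" "B = g * B1" by (simp_all add: A1_def B1_def g_def)
  ultimately have B1: "B1 \<noteq> 0" and sol1: "lin_ode_num C R A1 B1 = 0"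
    using B sol by (auto simp: lin_ode_num_mult)
  have "coprime A1 B1" unfolding A1_def B1_def g_def using B by (intro div_gcd_coprime) simp
  then obtain d n where d: "d \<noteq> 0" and B1_eq: "B1 = [:d:] * \<zeta> ^ n"
    using coprime_lin_ode_num_eq_0_imp_monomial B1 sol1 by blast
  define V where "V = smult (inverse d) A1"
  have "A1 = [:d:] * V" using d by (simp add: V_def)
  then have "[:d:]\<^sup>2 * lin_ode_num C R V (\<zeta> ^ n) = 0"
    using sol1 unfolding B1_eq by (simp only: lin_ode_num_mult)
  then have "lin_ode_num C R V (\<zeta> ^ n) = 0" using d by simp
  moreover have "lin_ode_num C R V (\<zeta> ^ n) = \<zeta> ^ n * (\<zeta> * pderiv V + (C - of_nat n) * V - R * \<zeta> ^ n)"
    unfolding lin_ode_num_def using \<zeta>_mult_pderiv_power[of n]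
    by (simp add: algebra_simps power2_eq_square)
  ultimately show ?thesis by auto
qed

definition moment_op :: "complex \<Rightarrow> complex \<Rightarrow> complex poly \<Rightarrow> complex poly" where
  "moment_op c e V = \<zeta> * pderiv V + weight_logderiv c e * V"

lemma weight_logderiv_minus_of_nat: "weight_logderiv c e - of_nat n = weight_logderiv (c - of_nat n) e"
  by (simp add: weight_logderiv_def of_nat_poly)

lemma moment_op_\<zeta>: "moment_op (c - 1) e (\<zeta> * V) = \<zeta> * moment_op c e V"
  by (simp add: moment_op_def weight_logderiv_def pderiv_mult one_pCons smult_diff_left algebra_simps)

lemma poly_moment_op_0: "poly (moment_op c e V) 0 = c * poly V 0"
  by (simp add: moment_op_def weight_logderiv_def)

text \<open>Dividing by z lowers the shift n until it is either 0 or a resonance c = m.\<close>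

lemma moment_op_shift_reduction:
  assumes "moment_op (c - of_nat n) e V = \<zeta> * g * \<zeta> ^ n"
  shows "(\<exists>V. moment_op c e V = \<zeta> * g) \<or>
    (\<exists>m\<ge>1. c = of_nat m \<and> (\<exists>V. moment_op 0 e V = \<zeta> * g * \<zeta> ^ m))"
  using assms
proof (induction n arbitrary: V)
  case 0
  then show ?case by auto
next
  case (Suc n)
  show ?case
  proof (cases "c = of_nat (Suc n)")
    case True
    then show ?thesis using Suc.prems by (intro disjI2 exI[of _ "Suc n"]) auto
  next
    case False
    have "(c - of_nat (Suc n)) * poly V 0 = 0"
      using arg_cong[OF Suc.prems, of "\<lambda>p. poly p 0"] by (simp add: poly_moment_op_0)
    then have "poly V 0 = 0" using False by simp
    then obtain V2 where V2: "V = \<zeta> * V2" by (auto simp: \<zeta>_def poly_eq_0_iff_dvd)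
    have "\<zeta> * moment_op (c - of_nat n) e V2 = \<zeta> * (\<zeta> * g * \<zeta> ^ n)"
      using Suc.prems moment_op_\<zeta>[of "c - of_nat n" e V2] by (simp add: V2 algebra_simps)
    then show ?thesis using Suc.IH by simp
  qed
qed

section \<open>A moment functional annihilating the image of moment_op\<close>

definition coeff_pairing :: "(nat \<Rightarrow> 'a) \<Rightarrow> 'a poly \<Rightarrow> 'a::comm_ring_1" where
  "coeff_pairing w p = (\<Sum>j\<le>degree p. coeff p j * w j)"

lemma coeff_pairing_eq: "degree p < N \<Longrightarrow> coeff_pairing w p = (\<Sum>j<N. coeff p j * w j)"
  unfolding coeff_pairing_def by (rule sum.mono_neutral_left) (auto simp: coeff_eq_0)

lemma coeff_pairing_0 [simp]: "coeff_pairing w 0 = 0"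
  by (simp add: coeff_pairing_def)

lemma coeff_pairing_add: "coeff_pairing w (p + q) = coeff_pairing w p + coeff_pairing w q"
proof -
  define N where "N = Suc (max (degree p) (degree q))"
  have "degree (p + q) < N" "degree p < N" "degree q < N"
    using degree_add_le_max[of p q] by (auto simp: N_def)
  then show ?thesis by (simp add: coeff_pairing_eq sum.distrib algebra_simps)
qed

lemma coeff_pairing_diff: "coeff_pairing w (p - q) = coeff_pairing w p - coeff_pairing w q"
  using coeff_pairing_add[of w "p - q" q] by simp

lemma coeff_pairing_sum: "coeff_pairing w (\<Sum>i\<in>A. f i) = (\<Sum>i\<in>A. coeff_pairing w (f i))"
  by (induction A rule: infinite_finite_induct) (simp_all add: coeff_pairing_add)

lemma coeff_pairing_monom: "coeff_pairing w (monom c j) = c * w j"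
  by (subst coeff_pairing_eq[of _ "Suc j"]) (simp_all add: le_imp_less_Suc degree_monom_le coeff_monom)

text \<open>Formal moments: for e = 1 and Re \<beta> > 0, gauss_moment \<beta> 1 j equals
  (2 / \<Gamma> \<beta>) times the integral of z^(j - 1) w(z) over (0, \<infinity>), w = z^(2\<beta>-1) exp(-z^2),
  for odd j; the recursion below is integration by parts.\<close>

definition gauss_moment :: "complex \<Rightarrow> complex \<Rightarrow> nat \<Rightarrow> complex" where
  "gauss_moment \<beta> e j = (if odd j then pochhammer \<beta> (j div 2) * e ^ (j div 2) else 0)"

lemma gauss_moment_rec:
  assumes e: "e\<^sup>2 = 1"
  shows "(of_nat j + (2 * \<beta> - 1)) * gauss_moment \<beta> e j = 2 * e * gauss_moment \<beta> e (j + 2)"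
proof (cases "odd j")
  case True
  then obtain i where j: "j = 2 * i + 1" by (metis oddE)
  have ee: "e * (e * x) = x" for x using e by (simp add: power2_eq_square mult.assoc[symmetric])
  show ?thesis using True unfolding gauss_moment_def j
    by (simp add: pochhammer_Suc algebra_simps ee)
next
  case False
  then show ?thesis by (simp add: gauss_moment_def)
qed

lemma moment_op_monom:
  "moment_op c e (monom a i) = monom (of_nat i * a) i + monom (c * a) i - monom (2 * e * a) (i + 2)"
proof -
  have "\<zeta> * pderiv (monom a i) = monom (of_nat i * a) i"
    by (cases i) (simp_all add: pderiv_monom \<zeta>_eq_monom mult_monom)
  moreover have "\<zeta>\<^sup>2 = monom 1 2" by (simp add: \<zeta>_eq_monom monom_power)
  ultimately show ?thesis
    by (simp add: moment_op_def weight_logderiv_def algebra_simps mult_monom smult_monom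
        flip: mult_smult_left)
qed

lemma coeff_pairing_moment_op:
  assumes e: "e\<^sup>2 = 1"
  shows "coeff_pairing (gauss_moment \<beta> e) (moment_op (2 * \<beta> - 1) e V) = 0"
proof -
  have "moment_op (2 * \<beta> - 1) e V = (\<Sum>i\<le>degree V. moment_op (2 * \<beta> - 1) e (monom (coeff V i) i))"
    by (subst (1) poly_as_sum_of_monoms[symmetric])
       (simp add: moment_op_def pderiv_sum sum_distrib_left sum.distrib)
  also have "coeff_pairing (gauss_moment \<beta> e) \<dots>
    = (\<Sum>i\<le>degree V. coeff V i * ((of_nat i + (2 * \<beta> - 1)) * gauss_moment \<beta> e i
                                   - 2 * e * gauss_moment \<beta> e (i + 2)))"
    by (simp add: coeff_pairing_sum moment_op_monom coeff_pairing_add coeff_pairing_diff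
        coeff_pairing_monom algebra_simps)
  also have "\<dots> = 0" by (simp add: gauss_moment_rec[OF e])
  finally show ?thesis .
qed

lemma coeff_pairing_gauss_moment_odd:
  assumes e: "e\<^sup>2 = 1"
  shows "coeff_pairing (gauss_moment \<beta> e) (\<zeta> ^ (2 * m + 1) * (h \<circ>\<^sub>p [:0, 0, e:]))
    = e ^ m * coeff_pairing (\<lambda>j. pochhammer \<beta> (j + m)) h"
proof -
  have q: "[:0, 0, e:] = monom e 2"
    by (rule poly_eqI) (simp add: coeff_pCons coeff_monom split: nat.split)
  have "\<zeta> ^ (2 * m + 1) * (h \<circ>\<^sub>p [:0, 0, e:]) = (\<Sum>j\<le>degree h. monom (coeff h j * e ^ j) (2 * j + (2 * m + 1)))"
    by (subst (1) poly_as_sum_of_monoms[symmetric])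
       (simp add: q pcompose_sum monom_pcompose_monom \<zeta>_eq_monom monom_power sum_distrib_left mult_monom ac_simps)
  then have "coeff_pairing (gauss_moment \<beta> e) (\<zeta> ^ (2 * m + 1) * (h \<circ>\<^sub>p [:0, 0, e:]))
    = (\<Sum>j\<le>degree h. coeff h j * e ^ j * gauss_moment \<beta> e (2 * j + (2 * m + 1)))"
    by (simp add: coeff_pairing_sum coeff_pairing_monom)
  also have "\<dots> = (\<Sum>j\<le>degree h. e ^ m * (coeff h j * pochhammer \<beta> (j + m)))"
  proof (rule sum.cong)
    fix j
    have "e ^ j * e ^ (j + m) = (e\<^sup>2) ^ j * e ^ m" by (simp add: power_add power_mult mult_2 power2_eq_square power_mult_distrib)
    then have "e ^ j * e ^ (j + m) = e ^ m" using e by simp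
    moreover have "(2 * j + (2 * m + 1)) div 2 = j + m" by simp
    ultimately show "coeff h j * e ^ j * gauss_moment \<beta> e (2 * j + (2 * m + 1)) = e ^ m * (coeff h j * pochhammer \<beta> (j + m))"
      unfolding gauss_moment_def by (simp add: ac_simps)
  qed simp
  finally show ?thesis by (simp add: coeff_pairing_def sum_distrib_left)
qed

lemma alternating_binomial_sum_Suc:
  fixes g :: "nat \<Rightarrow> 'a::comm_ring_1"
  shows "(\<Sum>l\<le>Suc k. (-1) ^ l * of_nat (Suc k choose l) * g l)
       = (\<Sum>l\<le>k. (-1) ^ l * of_nat (k choose l) * (g l - g (Suc l)))"
proof -
  have shift: "(\<Sum>l\<le>Suc k. (-1) ^ l * of_nat (n choose l) * g l)
      = g 0 + (\<Sum>l\<le>k. (-1) ^ Suc l * of_nat (n choose Suc l) * g (Suc l))" for n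
    by (subst sum.atMost_Suc_shift) simp
  have A: "(\<Sum>l\<le>Suc k. (-1) ^ l * of_nat (Suc k choose l) * g l)
      = g 0 + (\<Sum>l\<le>k. (-1) ^ Suc l * of_nat (k choose l) * g (Suc l))
            + (\<Sum>l\<le>k. (-1) ^ Suc l * of_nat (k choose Suc l) * g (Suc l))"
    by (simp only: shift binomial_Suc_Suc of_nat_add distrib_right distrib_left sum.distrib add.assoc)
  have B: "(\<Sum>l\<le>k. (-1) ^ l * of_nat (k choose l) * g l)
      = g 0 + (\<Sum>l\<le>k. (-1) ^ Suc l * of_nat (k choose Suc l) * g (Suc l))"
    using shift[of k] by (simp add: binomial_eq_0)
  have C: "(\<Sum>l\<le>k. (-1) ^ l * of_nat (k choose l) * (g l - g (Suc l)))
     = (\<Sum>l\<le>k. (-1) ^ l * of_nat (k choose l) * g l)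
       + (\<Sum>l\<le>k. (-1) ^ Suc l * of_nat (k choose l) * g (Suc l))"
    by (simp add: sum_subtractf right_diff_distrib sum_negf)
  show ?thesis unfolding C A B by (simp add: algebra_simps)
qed

text \<open>The k-th finite difference of the polynomial \<open>\<lambda>x. pochhammer (\<beta> + x) i\<close> of degree i.\<close>

lemma alternating_binomial_sum_pochhammer:
  fixes \<beta> :: "'a::{comm_ring_1,ring_char_0}"
  assumes "i \<le> k"
  shows "(\<Sum>l\<le>k. (-1) ^ l * of_nat (k choose l) * pochhammer (\<beta> + of_nat l) i)
    = (if i = k then (-1) ^ k * fact k else 0)"
  using assms
proof (induction k arbitrary: i \<beta>)
  case 0
  then show ?case by simp
next
  case (Suc k)
  show ?case
  proof (cases i)
    case 0
    then show ?thesis using alternating_binomial_sum_Suc[of k "\<lambda>_. 1"] by simp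
  next
    case (Suc i')
    have diff: "pochhammer (\<beta> + of_nat l) (Suc i') - pochhammer (\<beta> + of_nat (Suc l)) (Suc i')
      = - of_nat (Suc i') * pochhammer (\<beta> + 1 + of_nat l) i'" for l
    proof -
      have "pochhammer (\<beta> + of_nat l) (Suc i') = (\<beta> + of_nat l) * pochhammer (\<beta> + 1 + of_nat l) i'"
        by (simp add: pochhammer_rec add_ac)
      moreover have "pochhammer (\<beta> + of_nat (Suc l)) (Suc i')
          = pochhammer (\<beta> + 1 + of_nat l) i' * (\<beta> + 1 + of_nat l + of_nat i')"
        by (simp add: pochhammer_Suc add_ac)
      ultimately show ?thesis by (simp add: algebra_simps)
    qed
    have step: "(\<Sum>l\<le>Suc k. (-1) ^ l * of_nat (Suc k choose l) * pochhammer (\<beta> + of_nat l) (Suc i'))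
      = - of_nat (Suc i') * (\<Sum>l\<le>k. (-1) ^ l * of_nat (k choose l) * pochhammer (\<beta> + 1 + of_nat l) i')"
      unfolding alternating_binomial_sum_Suc diff by (simp add: sum_distrib_left algebra_simps)
    have "i' \<le> k" using Suc.prems \<open>i = Suc i'\<close> by simp
    then show ?thesis
      unfolding \<open>i = Suc i'\<close> step Suc.IH[OF \<open>i' \<le> k\<close>] by (simp add: algebra_simps)
  qed
qed

text \<open>Orthogonality of the Laguerre polynomials, in the form needed here.\<close>

lemma coeff_pairing_kummer_poly_sq:
  "coeff_pairing (pochhammer b) ((kummer_poly k b)\<^sup>2) = fact k * pochhammer b k"
proof -
  let ?c = "kummer_coeff k b"
  have inner: "(\<Sum>l\<le>k. ?c l * pochhammer b (l + i)) = pochhammer b k * (if i = k then (-1) ^ k * fact k else 0)"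
    if "i \<le> k" for i
  proof -
    have "?c l * pochhammer b (l + i) = pochhammer b k * ((-1) ^ l * of_nat (k choose l) * pochhammer (b + of_nat l) i)"
      if "l \<le> k" for l
    proof -
      have k: "pochhammer b k = pochhammer b l * pochhammer (b + of_nat l) (k - l)"
        using pochhammer_product'[of b l "k - l"] that by simp
      have binom: "pochhammer (- of_nat k) l / fact l = ((-1) ^ l * of_nat (k choose l) :: complex)"
        by (simp add: binomial_gbinomial gbinomial_pochhammer)
      have "?c l * pochhammer b (l + i) = (pochhammer (- of_nat k) l / fact l)
          * (pochhammer b l * pochhammer (b + of_nat l) (k - l)) * pochhammer (b + of_nat l) i"
        unfolding kummer_coeff_def pochhammer_product' by (simp add: algebra_simps)
      then show ?thesis
        unfolding binom k[symmetric] by (simp add: algebra_simps)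
    qed
    then have "(\<Sum>l\<le>k. ?c l * pochhammer b (l + i))
        = pochhammer b k * (\<Sum>l\<le>k. (-1) ^ l * of_nat (k choose l) * pochhammer (b + of_nat l) i)"
      by (simp add: sum_distrib_left)
    then show ?thesis unfolding alternating_binomial_sum_pochhammer[OF that] .
  qed
  have "(kummer_poly k b)\<^sup>2 = (\<Sum>i\<le>k. \<Sum>l\<le>k. monom (?c i * ?c l) (l + i))"
    unfolding kummer_poly_def power2_eq_square sum_distrib_right sum_distrib_left
    by (simp add: mult_monom ac_simps)
  then have "coeff_pairing (pochhammer b) ((kummer_poly k b)\<^sup>2)
      = (\<Sum>i\<le>k. ?c i * (\<Sum>l\<le>k. ?c l * pochhammer b (l + i)))"
    by (simp add: coeff_pairing_sum coeff_pairing_monom sum_distrib_left algebra_simps)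
  also have "\<dots> = ?c k * (pochhammer b k * ((-1) ^ k * fact k))"
    by (simp add: inner if_distrib sum.delta cong: if_cong)
  also have "\<dots> = fact k * pochhammer b k"
    by (simp add: kummer_coeff_top algebra_simps flip: power_add mult_2)
  finally show ?thesis .
qed

lemma moment_op_obstruction:
  assumes e: "e\<^sup>2 = 1"
    and sol: "moment_op (2 * \<beta> - 1) e V = \<zeta> ^ (2 * m + 1) * (kummer_quad k (\<beta> + of_nat m) e)\<^sup>2"
  shows "pochhammer \<beta> m * pochhammer (\<beta> + of_nat m) k = 0"
proof -
  let ?b = "\<beta> + of_nat m"
  have sq: "(kummer_quad k ?b e)\<^sup>2 = (kummer_poly k ?b)\<^sup>2 \<circ>\<^sub>p [:0, 0, e:]"
    by (simp add: kummer_quad_def pcompose_power)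
  have "coeff_pairing (gauss_moment \<beta> e) (\<zeta> ^ (2 * m + 1) * ((kummer_poly k ?b)\<^sup>2 \<circ>\<^sub>p [:0, 0, e:])) = 0"
    using coeff_pairing_moment_op[OF e, of \<beta> V] unfolding sol sq .
  then have "e ^ m * coeff_pairing (\<lambda>j. pochhammer \<beta> (j + m)) ((kummer_poly k ?b)\<^sup>2) = 0"
    unfolding coeff_pairing_gauss_moment_odd[OF e] .
  moreover have "coeff_pairing (\<lambda>j. pochhammer \<beta> (j + m)) ((kummer_poly k ?b)\<^sup>2)
      = pochhammer \<beta> m * coeff_pairing (pochhammer ?b) ((kummer_poly k ?b)\<^sup>2)"
  proof -
    have "pochhammer \<beta> (j + m) = pochhammer \<beta> m * pochhammer ?b j" for j
      by (subst add.commute) (rule pochhammer_product')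
    then show ?thesis unfolding coeff_pairing_def sum_distrib_left by (simp only: ac_simps)
  qed
  moreover have "e ^ m \<noteq> 0" using e by auto
  ultimately show ?thesis by (auto simp: coeff_pairing_kummer_poly_sq)
qed

lemma pochhammer_nonzero_if_Re_pos: "0 < Re x \<Longrightarrow> pochhammer x n \<noteq> 0"
  by (auto simp: pochhammer_eq_0_iff)

lemma Nats_if_moment_ode_solvable:
  assumes e: "e\<^sup>2 = 1" and solvable: "moment_ode_solvable k b e"
  shows "b - 1 + of_nat k \<in> \<nat>"
proof -
  define f where "f = kummer_quad k b e"
  obtain A B where "B \<noteq> 0" "lin_ode_num (weight_logderiv (2 * b - 1) e) (\<zeta> * f\<^sup>2) A B = 0"
    using solvable unfolding moment_ode_solvable_def f_def by blast
  then obtain V n where "\<zeta> * pderiv V + (weight_logderiv (2 * b - 1) e - of_nat n) * V = \<zeta> * f\<^sup>2 * \<zeta> ^ n"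
    using lin_ode_num_eq_0_imp_monomial_denominator by blast
  then have "moment_op (2 * b - 1 - of_nat n) e V = \<zeta> * f\<^sup>2 * \<zeta> ^ n"
    by (simp add: moment_op_def weight_logderiv_minus_of_nat)
  from moment_op_shift_reduction[OF this] show ?thesis
  proof (elim disjE exE conjE)
    fix V assume "moment_op (2 * b - 1) e V = \<zeta> * f\<^sup>2"
    then have "moment_op (2 * b - 1) e V = \<zeta> ^ (2 * 0 + 1) * (kummer_quad k (b + of_nat 0) e)\<^sup>2"
      by (simp add: f_def)
    then have "pochhammer b k = 0" using moment_op_obstruction[OF e] by fastforce
    then obtain i where "i < k" "b = - of_nat i" by (auto simp: pochhammer_eq_0_iff)
    then have "b - 1 + of_nat k = of_nat (k - 1 - i)" by (simp add: of_nat_diff)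
    then show ?thesis by (metis of_nat_in_Nats)
  next
    fix m V assume m: "2 * b - 1 = of_nat m" and V: "moment_op 0 e V = \<zeta> * f\<^sup>2 * \<zeta> ^ m"
    show ?thesis
    proof (cases "even m")
      case True
      then obtain m' where m': "m = 2 * m'" by (metis evenE)
      then have "2 * b = 2 * (1 / 2 + of_nat m')" using m by (simp add: algebra_simps)
      then have b: "b = 1 / 2 + of_nat m'" unfolding mult_cancel_left by simp
      have "moment_op (2 * (1 / 2) - 1) e V = \<zeta> ^ (2 * m' + 1) * (kummer_quad k (1 / 2 + of_nat m') e)\<^sup>2"
        using V unfolding f_def b[symmetric] m' by (simp add: ac_simps)
      then have "pochhammer (1 / 2) m' * pochhammer b k = 0"
        using moment_op_obstruction[OF e] b by blast
      moreover have "pochhammer (1 / 2 :: complex) m' \<noteq> 0" "pochhammer b k \<noteq> 0"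
        by (simp_all add: pochhammer_nonzero_if_Re_pos b)
      ultimately show ?thesis by simp
    next
      case False
      then obtain s where "m = 2 * s + 1" by (metis oddE)
      then have "2 * b = 2 * (of_nat s + 1)" using m by (simp add: algebra_simps)
      then have "b = of_nat s + 1" unfolding mult_cancel_left by simp
      then have "b - 1 + of_nat k = of_nat (s + k)" by simp
      then show ?thesis by (metis of_nat_in_Nats)
    qed
  qed
qed

section \<open>Solutions of the first-order condition\<close>

lemma exists_pderiv_minus_smult_eq:
  fixes p :: "'a::field_char_0 poly"
  assumes e: "e \<noteq> 0"
  shows "\<exists>W. pderiv W - smult e W = p"
proof (induction "degree p" arbitrary: p rule: less_induct)
  case less
  show ?case
  proof (cases "degree p = 0")
    case True
    then obtain c where "p = [:c:]" by (meson degree_eq_zeroE)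
    then have "pderiv [:- c / e:] - smult e [:- c / e:] = p" using e by simp
    then show ?thesis by blast
  next
    case False
    then have "degree (pderiv p) < degree p" by (simp add: degree_pderiv)
    then obtain W where W: "pderiv W - smult e W = pderiv p" using less by blast
    have "pderiv (smult (1 / e) (W - p)) - smult e (smult (1 / e) (W - p))
        = smult (1 / e) (pderiv W - smult e W - pderiv p) + p"
      using e by (simp add: pderiv_smult pderiv_diff algebra_simps smult_diff_right smult_add_right)
    also have "\<dots> = p" using W by simp
    finally show ?thesis by blast
  qed
qed

text \<open>w = exp(e z^2) times a primitive of 2 z exp(-e z^2) p(z^2); substituting x = z^2 this is
  exp(e x) times a primitive of exp(-e x) p(x), a polynomial.\<close>

lemma exists_gauss_primitive:
  assumes e: "e \<noteq> 0"
  shows "\<exists>w. pderiv w = 2 * [:e:] * \<zeta> * w + \<zeta> * (p \<circ>\<^sub>p \<zeta>\<^sup>2)"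
proof -
  obtain W where W: "pderiv W = smult e W + smult (1 / 2) p"
    using exists_pderiv_minus_smult_eq[OF e, of "smult (1 / 2) p"] by (auto simp: algebra_simps)
  have "pderiv (\<zeta>\<^sup>2) = 2 * \<zeta>" by (simp add: pderiv_power numeral_poly)
  then have "pderiv (W \<circ>\<^sub>p \<zeta>\<^sup>2) = 2 * [:e:] * \<zeta> * (W \<circ>\<^sub>p \<zeta>\<^sup>2) + \<zeta> * (p \<circ>\<^sub>p \<zeta>\<^sup>2)"
    unfolding pderiv_pcompose W by (simp add: pcompose_add pcompose_smult algebra_simps numeral_poly)
  then show ?thesis by blast
qed

lemma kummer_quad_eq_pcompose: "kummer_quad k b e = (kummer_poly k b \<circ>\<^sub>p [:0, e:]) \<circ>\<^sub>p \<zeta>\<^sup>2"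
  by (simp add: kummer_quad_def pcompose_assoc[symmetric] pcompose_pCons \<zeta>_def power2_eq_square)

lemma moment_ode_solvable_if_nat:
  assumes e: "e\<^sup>2 = 1" and b: "b = of_nat s + 1"
  shows "moment_ode_solvable k b e"
proof -
  define f E where "f = kummer_quad k b e" and "E = [:e:]"
  define p where "p = \<zeta> ^ s * (kummer_poly k b \<circ>\<^sub>p [:0, e:])\<^sup>2"
  have "e \<noteq> 0" using e by auto
  then obtain w where "pderiv w = 2 * E * \<zeta> * w + \<zeta> * (p \<circ>\<^sub>p \<zeta>\<^sup>2)"
    unfolding E_def using exists_gauss_primitive by blast
  moreover have "\<zeta> * (p \<circ>\<^sub>p \<zeta>\<^sup>2) = \<zeta> * \<zeta> ^ (2 * s) * f\<^sup>2"
    by (simp add: p_def f_def kummer_quad_eq_pcompose pcompose_mult pcompose_power ac_simps flip: power_mult)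
  ultimately have w: "pderiv w = 2 * E * \<zeta> * w + \<zeta> * \<zeta> ^ (2 * s) * f\<^sup>2" by simp
  have C: "weight_logderiv (2 * b - 1) e = of_nat (2 * s + 1) - 2 * E * \<zeta>\<^sup>2"
    by (simp add: weight_logderiv_def b E_def of_nat_poly algebra_simps numeral_poly)
  have "pderiv (\<zeta> ^ (2 * s + 1)) = of_nat (2 * s + 1) * \<zeta> ^ (2 * s)"
    by (simp only: Suc_eq_plus1[symmetric] pderiv_power_Suc pderiv_\<zeta>) (simp add: of_nat_poly)
  then have "lin_ode_num (weight_logderiv (2 * b - 1) e) (\<zeta> * f\<^sup>2) w (\<zeta> ^ (2 * s + 1)) = 0"
    unfolding lin_ode_num_def C w by (simp add: algebra_simps power2_eq_square)
  then show ?thesis unfolding moment_ode_solvable_def f_def by (intro exI conjI) simp_all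
qed

lemma kummer_coeff_eq_0_below:
  assumes "b = 1 - of_nat r" "r \<le> k" "j < r"
  shows "kummer_coeff k b j = 0"
proof -
  have "b + of_nat j = - of_nat (r - 1 - j)" "r - 1 - j < k - j"
    using assms by (simp_all add: of_nat_diff)
  then have "pochhammer (b + of_nat j) (k - j) = 0"
    unfolding pochhammer_eq_0_iff by blast
  then show ?thesis by (simp add: kummer_coeff_def)
qed

lemma moment_ode_solvable_if_neg_nat:
  assumes e: "e\<^sup>2 = 1" and b: "b = 1 - of_nat (Suc r)" and r: "Suc r \<le> k"
  shows "moment_ode_solvable k b e"
proof -
  define f E where "f = kummer_quad k b e" and "E = [:e:]"
  have "monom 1 (Suc r) dvd kummer_poly k b"
    using kummer_coeff_eq_0_below[OF b r] by (simp add: monom_1_dvd_iff' coeff_kummer_poly)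
  moreover have "monom 1 (Suc r) = \<zeta> ^ Suc r" by (simp only: \<zeta>_eq_monom monom_power) simp
  ultimately obtain G where "kummer_poly k b = \<zeta> ^ Suc r * G" by (metis dvdE)
  then have "kummer_poly k b \<circ>\<^sub>p [:0, e:] = smult (e ^ Suc r) (\<zeta> ^ Suc r) * (G \<circ>\<^sub>p [:0, e:])"
    by (simp add: pcompose_mult pcompose_power smult_power mult.commute flip: smult_\<zeta>)
  define g where "g = (G \<circ>\<^sub>p [:0, e:]) \<circ>\<^sub>p \<zeta>\<^sup>2"
  define Z where "Z = (\<zeta>\<^sup>2) ^ r"
  have "e ^ Suc r * e ^ Suc r = (e\<^sup>2) ^ Suc r"
    by (simp only: power2_eq_square power_mult_distrib)
  then have "e ^ Suc r * e ^ Suc r = 1" using e by simp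
  moreover have "f = smult (e ^ Suc r) (\<zeta>\<^sup>2 * Z) * g"
    by (simp add: f_def g_def Z_def \<open>kummer_poly k b \<circ>\<^sub>p [:0, e:] = _\<close>
        kummer_quad_eq_pcompose pcompose_mult pcompose_power pcompose_smult)
  ultimately have f: "f\<^sup>2 = Z\<^sup>2 * \<zeta> ^ 4 * g\<^sup>2"
    by (simp add: power2_eq_square eval_nat_numeral ac_simps)
  have "e \<noteq> 0" using e by auto
  then obtain w where "pderiv w = 2 * E * \<zeta> * w + \<zeta> * ((\<zeta> ^ Suc r * (G \<circ>\<^sub>p [:0, e:])\<^sup>2) \<circ>\<^sub>p \<zeta>\<^sup>2)"
    unfolding E_def using exists_gauss_primitive by blast
  then have w: "pderiv w = 2 * E * \<zeta> * w + Z * \<zeta> ^ 3 * g\<^sup>2"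
    by (simp add: g_def Z_def pcompose_mult pcompose_power ac_simps eval_nat_numeral)
  have C: "weight_logderiv (2 * b - 1) e = - of_nat (2 * r + 1) - 2 * E * \<zeta>\<^sup>2"
    by (simp add: weight_logderiv_def b E_def of_nat_poly algebra_simps numeral_poly)
  have "Z * \<zeta> = \<zeta> ^ Suc (2 * r)"
    by (simp only: Z_def power_mult[symmetric] power_Suc2)
  then have M: "pderiv (Z * \<zeta>) = of_nat (2 * r + 1) * Z"
    by (simp only: pderiv_power_Suc pderiv_\<zeta>) (simp add: Z_def power_mult of_nat_poly)
  have "lin_ode_num (weight_logderiv (2 * b - 1) e) (\<zeta> * f\<^sup>2) (Z * \<zeta> * w) 1 = 0"
    unfolding lin_ode_num_def C f pderiv_mult[of "Z * \<zeta>" w] M w by (simp add: algebra_simps eval_nat_numeral)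
  then show ?thesis unfolding moment_ode_solvable_def f_def by (intro exI conjI) simp_all
qed

lemma moment_ode_solvable_iff:
  assumes e: "e\<^sup>2 = 1"
  shows "moment_ode_solvable k b e \<longleftrightarrow> b - 1 + of_nat k \<in> \<nat>"
proof
  assume "b - 1 + of_nat k \<in> \<nat>"
  then obtain N where N: "b - 1 + of_nat k = of_nat N" by (auto elim: Nats_cases)
  show "moment_ode_solvable k b e"
  proof (cases "k \<le> N")
    case True
    then have "b = of_nat (N - k) + 1" using N by (simp add: of_nat_diff algebra_simps)
    then show ?thesis by (rule moment_ode_solvable_if_nat[OF e])
  next
    case False
    then obtain r where r: "k - N = Suc r" by (metis Suc_diff_Suc not_le)
    then have "b = 1 - of_nat (Suc r)" using N False by (simp add: of_nat_diff algebra_simps flip: r)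
    then show ?thesis by (rule moment_ode_solvable_if_neg_nat[OF e]) (use r in simp)
  qed
qed (rule Nats_if_moment_ode_solvable[OF e])

theorem mainTheorem11:
  fixes \<nu> :: complex and k :: nat and \<epsilon>1 \<epsilon>2 :: int and E0 :: complex
  assumes "\<epsilon>1 \<in> {1, -1}" and "\<epsilon>2 \<in> {1, -1}"
    and "E0 = of_int \<epsilon>1 * (4 * of_nat k + 2) + 4 * of_int \<epsilon>2 * \<nu>"
  shows "(\<exists>P Q :: complex poly poly.
            poly Q [:E0:] \<noteq> 0 \<and>
            (\<forall>z. Re z > 0 \<longrightarrow> Yfun \<nu> k \<epsilon>1 \<epsilon>2 z \<noteq> 0 \<longrightarrow> poly (poly Q [:E0:]) z \<noteq> 0 \<longrightarrow>
                 poly (poly P [:E0:]) z / poly (poly Q [:E0:]) z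
                   = - deriv (Yfun \<nu> k \<epsilon>1 \<epsilon>2) z / Yfun \<nu> k \<epsilon>1 \<epsilon>2 z) \<and>
            [:[:- E0:], 1:]^2 dvd Hnum \<nu> P Q)
         \<longleftrightarrow> 2 * of_int \<epsilon>1 * of_int \<epsilon>2 * \<nu> + of_nat k \<in> \<nat>"
proof -
  define e :: complex where "e = of_int \<epsilon>1"
  define b where "b = 2 * of_int \<epsilon>1 * of_int \<epsilon>2 * \<nu> + 1"
  have e: "e\<^sup>2 = 1" and \<epsilon>2: "(of_int \<epsilon>2 :: complex)\<^sup>2 = 1"
    using assms(1,2) by (auto simp: e_def)
  have "E0 = 2 * e * (2 * of_nat k + b)"
    using assms(3) e by (simp add: e_def b_def algebra_simps power2_eq_square)
  moreover have "4 * \<nu>\<^sup>2 - 1 = b\<^sup>2 - 2 * b"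
    using e \<epsilon>2 by (simp add: e_def b_def algebra_simps power2_eq_square)
  ultimately have "(\<exists>P Q. riccati_witness \<nu> k \<epsilon>1 \<epsilon>2 E0 P Q) \<longleftrightarrow> moment_ode_solvable k b e"
    using riccati_witness_if_moment_ode_solvable[OF e_def b_def e]
      moment_ode_solvable_if_riccati_witness[OF e_def b_def e] by blast
  also have "\<dots> \<longleftrightarrow> 2 * of_int \<epsilon>1 * of_int \<epsilon>2 * \<nu> + of_nat k \<in> \<nat>"
    unfolding moment_ode_solvable_iff[OF e] by (simp add: b_def)
  finally show ?thesis unfolding riccati_witness_def .
qed

end
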